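(* Let $N_s,\beta,\varepsilon$ be positive integers, $P_b\in(0,1]$, and for $0\le j\le N_s-1$ let $N(j)=N_s-j$, $\gamma(j)=N(j)-\beta$, $\hat{\varepsilon}(j)=\min\{\gamma(j),\varepsilon\}$ (when $\gamma(j)\ge 0$), and $P_W(j)=(1-P_b)^jP_b$. Consider an ED $\mathrm{E}'$ whose wake-up slot $W$ satisfies $P(W=j)=P_W(j)$ for $0\le j\le N_s-1$ (with the remaining probability it never wakes up and transmits nothing), and which, after waking up, transmits according to one of the two schemes described in the context. Then for every slot $s\in\{0,\dots,N_s-1\}$, the probability that $\mathrm{E}'$ transmits a frame in slot $s$ is \[ P_{\mathrm{col}}(s)=\sum_{j=0}^{\min\{N_s-\beta-y,\,s\}}\frac{\beta+r_j}{N(j)}P_W(j)\;+\;\theta_s\sum_{j=N_s-\beta-y+1}^{s}\min\left\{\frac{\beta}{N(j)},1\right\}P_W(j), \] where $r_j=y=\varepsilon$ for the fountain-coding scheme, $r_j=\hat{\varepsilon}(j)$ and $y=0$ for the message-replication scheme, $\theta_s=1$ if $s>N_s-\beta-y$ and $\theta_s=0$ otherwise, and empty sums are zero.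
   Context: An ED has $\beta$ messages to deliver to a UAV during a session of $N_s$ slots (numbered $0,\dots,N_s-1$). An ED waking in slot $i$ may use only the $N(i)=N_s-i$ slots $i,\dots,N_s-1$, transmitting at most one frame per slot; $\varepsilon\ge 1$ is a design parameter. Whenever the ED has $K\le N(i)$ frames to send, it places them in $K$ distinct slots chosen uniformly at random among the $N(i)$ available slots. Fountain-coding scheme: if $\gamma(i)\ge\varepsilon$, the ED sends $\beta+\varepsilon$ coded frames in $\beta+\varepsilon$ uniformly random distinct available slots; if $\gamma(i)<\varepsilon$ and $\beta\le N(i)$, it sends its $\beta$ uncoded messages in $\beta$ uniformly random distinct available slots; if $\beta>N(i)$, it sends $N(i)$ randomly selected messages, one in each available slot. Message-replication scheme: if $\gamma(i)\ge 0$, the ED sends $\beta+\hat{\varepsilon}(i)$ frames (message replicas) in $\beta+\hat{\varepsilon}(i)$ uniformly random distinct available slots; if $\gamma(i)<0$, it sends $N(i)$ randomly selected messages, one in each available slot. *)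

theory Defs
  imports "HOL-Probability.Probability"
begin

datatype scheme = Fountain | Replication

definition Nsl :: "nat \<Rightarrow> nat \<Rightarrow> nat" where
  "Nsl Ns j = Ns - j"

definition gam :: "nat \<Rightarrow> nat \<Rightarrow> nat \<Rightarrow> int" where
  "gam Ns beta j = int (Nsl Ns j) - int beta"

definition epshat :: "nat \<Rightarrow> nat \<Rightarrow> nat \<Rightarrow> nat \<Rightarrow> int" where
  "epshat Ns beta eps j = min (gam Ns beta j) (int eps)"

definition PW :: "real \<Rightarrow> nat \<Rightarrow> real" where
  "PW Pb j = (1 - Pb) ^ j * Pb"

definition nframes :: "scheme \<Rightarrow> nat \<Rightarrow> nat \<Rightarrow> nat \<Rightarrow> nat \<Rightarrow> nat" where
  "nframes sch Ns beta eps j =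
     (case sch of
        Fountain \<Rightarrow>
          (if gam Ns beta j \<ge> int eps then beta + eps
           else if beta \<le> Nsl Ns j then beta
           else Nsl Ns j)
      | Replication \<Rightarrow>
          (if gam Ns beta j \<ge> 0 then beta + nat (epshat Ns beta eps j)
           else Nsl Ns j))"

definition slot_choice :: "nat \<Rightarrow> nat \<Rightarrow> nat \<Rightarrow> nat set pmf" where
  "slot_choice Ns j (K::nat) = pmf_of_set {S. S \<subseteq> {j..<Ns} \<and> card S = K}"

text \<open>The wake-up slot W has P(W = j) = (1-P_b)^j P_b (geometric); if W \<ge> N_s the ED
  never wakes up during the session and transmits nothing.\<close>
definition tx_slots :: "scheme \<Rightarrow> nat \<Rightarrow> nat \<Rightarrow> nat \<Rightarrow> real \<Rightarrow> nat set pmf" where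
  "tx_slots sch Ns beta eps Pb =
     bind_pmf (geometric_pmf Pb)
       (\<lambda>j. if j < Ns then slot_choice Ns j (nframes sch Ns beta eps j)
            else return_pmf {})"

definition r_par :: "scheme \<Rightarrow> nat \<Rightarrow> nat \<Rightarrow> nat \<Rightarrow> nat \<Rightarrow> int" where
  "r_par sch Ns beta eps j = (case sch of Fountain \<Rightarrow> int eps | Replication \<Rightarrow> epshat Ns beta eps j)"

definition y_par :: "scheme \<Rightarrow> nat \<Rightarrow> int" where
  "y_par sch eps = (case sch of Fountain \<Rightarrow> int eps | Replication \<Rightarrow> 0)"

end

theory Submission
  imports Defs
begin

text \<open>Condition on the wake-up slot \<open>j\<close>. The \<open>K\<close> frames then occupy a uniformly random
  \<open>K\<close>-subset of the \<open>N(j)\<close> available slots, which contains a fixed available slot with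
  probability \<open>(N(j)-1 choose K-1) / (N(j) choose K) = K / N(j)\<close>. Averaging over the geometric
  wake-up law gives \<open>\<Sum>j\<le>s. K(j) / N(j) * P_W(j)\<close>; at or below the threshold
  \<open>N_s - \<beta> - y\<close> both schemes send \<open>K(j) = \<beta> + r_j\<close> frames, above it they send
  \<open>min \<beta> N(j)\<close>.\<close>

lemma prob_bind_pmf:
  "measure_pmf.prob (bind_pmf p f) B = measure_pmf.expectation p (\<lambda>x. measure_pmf.prob (f x) B)"
  unfolding measure_pmf_bind
  by (rule measure_pmf.measure_bind[where N="count_space UNIV"])
     (auto simp: space_subprob_algebra measure_pmf.subprob_space_axioms)

lemma card_subsets_containing:
  assumes "finite A" "a \<in> A" "0 < k"
  shows "card {S. S \<subseteq> A \<and> card S = k \<and> a \<in> S} = (card A - 1) choose (k - 1)"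
proof -
  have "{S. S \<subseteq> A \<and> card S = k \<and> a \<in> S} = insert a ` {T. T \<subseteq> A - {a} \<and> card T = k - 1}"
  proof (intro equalityI subsetI)
    fix S assume S: "S \<in> {S. S \<subseteq> A \<and> card S = k \<and> a \<in> S}"
    then have "S = insert a (S - {a})" "card (S - {a}) = k - 1"
      using finite_subset[OF _ assms(1)] by auto
    with S show "S \<in> insert a ` {T. T \<subseteq> A - {a} \<and> card T = k - 1}" by blast
  next
    fix S assume "S \<in> insert a ` {T. T \<subseteq> A - {a} \<and> card T = k - 1}"
    then obtain T where "T \<subseteq> A - {a}" "card T = k - 1" "S = insert a T" by blast
    moreover have "finite T"
      using \<open>T \<subseteq> A - {a}\<close> assms(1) by (meson finite_Diff finite_subset)
    ultimately show "S \<in> {S. S \<subseteq> A \<and> card S = k \<and> a \<in> S}"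
      using assms by (auto simp: card_insert_if)
  qed
  moreover have "inj_on (insert a) {T. T \<subseteq> A - {a} \<and> card T = k - 1}"
    by (rule inj_onI) blast
  ultimately show ?thesis
    using assms n_subsets[of "A - {a}" "k - 1"] by (simp add: card_image)
qed

lemma prob_mem_pmf_of_subsets:
  assumes "finite A" "k \<le> card A"
  shows "measure_pmf.prob (pmf_of_set {S. S \<subseteq> A \<and> card S = k}) {S. a \<in> S}
       = (if a \<in> A then real k / real (card A) else 0)"
proof -
  let ?X = "{S. S \<subseteq> A \<and> card S = k}"
  have X_card: "card ?X = card A choose k"
    using n_subsets[OF assms(1)] .
  have "?X \<noteq> {}"
    using obtain_subset_with_card_n[OF assms(2)] by blast
  moreover have "finite ?X"
    using assms(1) by (auto intro: finite_subset[of _ "Pow A"])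
  ultimately have prob_eq: "measure_pmf.prob (pmf_of_set ?X) {S. a \<in> S} = card (?X \<inter> {S. a \<in> S}) / card ?X"
    by (rule measure_pmf_of_set)
  show ?thesis
  proof (cases "a \<in> A \<and> 0 < k")
    case True
    have "real k * real (card A choose k) = real (card A) * real ((card A - 1) choose (k - 1))"
      using times_binomial_minus1_eq[of k "card A"] True by (metis of_nat_mult)
    moreover have "0 < card A choose k" "0 < card A"
      using assms True by (auto simp: card_gt_0_iff)
    ultimately have "real ((card A - 1) choose (k - 1)) / real (card A choose k) = real k / real (card A)"
      by (simp add: frac_eq_eq ac_simps)
    moreover have "?X \<inter> {S. a \<in> S} = {S. S \<subseteq> A \<and> card S = k \<and> a \<in> S}"
      by auto
    ultimately show ?thesis
      using True prob_eq X_card card_subsets_containing[OF assms(1), of a k] by simp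
  next
    case False
    then have "?X \<inter> {S. a \<in> S} = {}"
      using assms(1) by (auto dest: finite_subset simp: card_eq_0_iff)
    with False prob_eq show ?thesis by auto
  qed
qed

lemma nframes_le_Nsl: "nframes sch Ns beta eps j \<le> Nsl Ns j"
  by (cases sch) (auto simp: nframes_def gam_def epshat_def Nsl_def)

lemma nframes_below_threshold:
  assumes "j < Ns" "int j \<le> int Ns - int beta - y_par sch eps"
  shows "real (nframes sch Ns beta eps j) = real beta + of_int (r_par sch Ns beta eps j)"
  using assms by (cases sch) (auto simp: nframes_def gam_def epshat_def Nsl_def y_par_def r_par_def)

lemma nframes_above_threshold:
  assumes "\<not> int j \<le> int Ns - int beta - y_par sch eps"
  shows "nframes sch Ns beta eps j = min beta (Nsl Ns j)"
  using assms by (cases sch) (auto simp: nframes_def gam_def epshat_def y_par_def Nsl_def)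

lemma prob_tx_slots_mem:
  assumes "0 < Pb" "Pb \<le> 1" "s < Ns"
  shows "measure_pmf.prob (tx_slots sch Ns beta eps Pb) {S. s \<in> S} =
    (\<Sum>j\<le>s. real (nframes sch Ns beta eps j) / real (Nsl Ns j) * PW Pb j)"
proof -
  define g where "g j = real (nframes sch Ns beta eps j) / real (Nsl Ns j)" for j
  have prob_given_wakeup:
    "measure_pmf.prob (if j < Ns then slot_choice Ns j (nframes sch Ns beta eps j) else return_pmf {})
       {S. s \<in> S} = (if j \<le> s then g j else 0)" for j
    using assms(3) nframes_le_Nsl[of sch Ns beta eps j]
    by (auto simp: slot_choice_def prob_mem_pmf_of_subsets g_def Nsl_def)
  have "measure_pmf.prob (tx_slots sch Ns beta eps Pb) {S. s \<in> S} =
      measure_pmf.expectation (geometric_pmf Pb) (\<lambda>j. if j \<le> s then g j else 0)"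
    unfolding tx_slots_def prob_bind_pmf prob_given_wakeup ..
  also have "\<dots> = (\<Sum>j\<le>s. (if j \<le> s then g j else 0) * pmf (geometric_pmf Pb) j)"
    by (rule integral_measure_pmf_real) (auto split: if_splits)
  also have "\<dots> = (\<Sum>j\<le>s. g j * PW Pb j)"
    using assms by (simp add: PW_def)
  finally show ?thesis
    unfolding g_def .
qed

lemma sum_atMost_split_at_int:
  fixes T :: int and f g :: "nat \<Rightarrow> 'a::comm_monoid_add"
  shows "(\<Sum>j\<le>s. if int j \<le> T then f j else g j) =
    (\<Sum>j\<in>{0..min T (int s)}. f (nat j)) + (\<Sum>j\<in>{max 0 (T + 1)..int s}. g (nat j))"
proof -
  have "(\<Sum>j\<le>s. if int j \<le> T then f j else g j) =
      sum f {j. j \<le> s \<and> int j \<le> T} + sum g {j. j \<le> s \<and> \<not> int j \<le> T}"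
    by (simp add: sum.If_cases Int_def atMost_def)
  moreover have "{0..min T (int s)} = int ` {j. j \<le> s \<and> int j \<le> T}"
    "{max 0 (T + 1)..int s} = int ` {j. j \<le> s \<and> \<not> int j \<le> T}"
    by (auto simp: max_def split: if_splits intro!: image_eqI[where x = "nat x" for x])
  ultimately show ?thesis
    by (simp add: sum.reindex)
qed

theorem lemma2:
  fixes Ns beta eps s :: nat and Pb :: real and sch :: scheme
  assumes "Ns > 0" "beta > 0" "eps > 0" "0 < Pb" "Pb \<le> 1" "s < Ns"
  shows "measure_pmf.prob (tx_slots sch Ns beta eps Pb) {S. s \<in> S} =
     (\<Sum>j \<in> {0 .. min (int Ns - int beta - y_par sch eps) (int s)}.
        (real beta + of_int (r_par sch Ns beta eps (nat j))) / real (Nsl Ns (nat j)) * PW Pb (nat j))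
   + (if int s > int Ns - int beta - y_par sch eps then 1 else 0) *
     (\<Sum>j \<in> {max 0 (int Ns - int beta - y_par sch eps + 1) .. int s}.
        min (real beta / real (Nsl Ns (nat j))) 1 * PW Pb (nat j))"
proof -
  define T where "T = int Ns - int beta - y_par sch eps"
  define h1 where "h1 j = (real beta + of_int (r_par sch Ns beta eps j)) / real (Nsl Ns j) * PW Pb j" for j
  define h2 where "h2 j = min (real beta / real (Nsl Ns j)) 1 * PW Pb j" for j
  have summand_eq: "real (nframes sch Ns beta eps j) / real (Nsl Ns j) * PW Pb j =
      (if int j \<le> T then h1 j else h2 j)" if "j < Ns" for j
  proof (cases "int j \<le> T")
    case True
    then show ?thesis
      using nframes_below_threshold[OF that] by (simp add: T_def h1_def)
  next
    case False
    have "real (nframes sch Ns beta eps j) = min (real beta) (real (Nsl Ns j))"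
      using False nframes_above_threshold[of j Ns beta sch eps] by (simp add: T_def)
    moreover have "0 < real (Nsl Ns j)"
      using that by (simp add: Nsl_def)
    ultimately show ?thesis
      using False by (simp add: h2_def min_divide_distrib_right)
  qed
  have "measure_pmf.prob (tx_slots sch Ns beta eps Pb) {S. s \<in> S} =
      (\<Sum>j\<le>s. if int j \<le> T then h1 j else h2 j)"
    using assms summand_eq by (simp add: prob_tx_slots_mem)
  also have "\<dots> = (\<Sum>j\<in>{0..min T (int s)}. h1 (nat j)) + (\<Sum>j\<in>{max 0 (T + 1)..int s}. h2 (nat j))"
    by (rule sum_atMost_split_at_int)
  also have "(\<Sum>j\<in>{max 0 (T + 1)..int s}. h2 (nat j)) =
      (if int s > T then 1 else 0) * (\<Sum>j\<in>{max 0 (T + 1)..int s}. h2 (nat j))"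
    by simp
  finally show ?thesis
    unfolding T_def h1_def h2_def .
qed

end
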